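(* Let $L$ be an infinite set and consider the edgeless cube $Q_L$. Let $f$ be a legal configuration accessible from $f_{\mathrm{solved}}$ and let $C$ be a non-center cluster, whose unique representative in the quadrant $D$ is $(\alpha,\beta,+\infty)$ with $\alpha\in L$, $\beta\in\{0\}\cup L$. Then there is a finite basic sequence $s$ such that, if $g$ is the terminal configuration of $s$ applied to $f$, then $g(c)=f_{\mathrm{solved}}(c)$ for all $c\in C$ and $g(c)=f(c)$ for all cells $c\notin C$. Moreover, $s$ uses only face twists and basic twists of the form $T_{i,\gamma}^j$ with $i\in\{x,y,z\}$, $\gamma\in\{\alpha,-\alpha,\beta,-\beta\}$, $j\in\{1,2,3\}$.
   Context: Let $L$ be an infinite set, $-L=\{-r:r\in L\}$ a disjoint copy of $L$, and $0$ a new element; $L^\dagger=-L\cup\{0\}\cup L$ with $-(-r)=r$, $-0=0$. Adjoin $\pm\infty$ with $-(+\infty)=-\infty$ and set $\bar L^\dagger=L^\dagger\cup\{\pm\infty\}$. Points of $U=(\bar L^\dagger)^3$ have coordinates $x,y,z$. The edgeless cube $Q_L$ is the set of cells: points of $U$ with exactly one coordinate in $\{\pm\infty\}$. For $i\in\{x,y,z\}$, $\alpha\in\bar L^\dagger$, the quarter-turn twist $T_{i,\alpha}$ is the permutation of cells fixing every cell $p$ with $p_i\ne\alpha$ and acting on the others by $T_{x,\alpha}(\alpha,y,z)=(\alpha,-z,y)$, $T_{y,\alpha}(x,\alpha,z)=(z,\alpha,-x)$, $T_{z,\alpha}(x,y,\alpha)=(-y,x,\alpha)$; face twists are the basic twists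 with $\alpha=\pm\infty$. Basic twists are $T,T^2,T^3$ for quarter-turn twists $T$. A basic sequence is a sequence $\langle\sigma_\eta:\eta<\theta\rangle$ of basic twists of ordinal length $\theta$. A configuration is a map $f$ from cells to the six colors red, white, green, orange, yellow, blue together with a special value NaC; it is legal if it never takes value NaC. The solved configuration $f_{\mathrm{solved}}$ colors a cell red, blue, white, orange, green, yellow according as $x=+\infty$, $y=+\infty$, $z=+\infty$, $x=-\infty$, $y=-\infty$, $z=-\infty$. A twist $\sigma$ acts by $(\sigma f)(c)=f(\sigma^{-1}c)$. Applying $\langle\sigma_\eta:\eta<\theta\rangle$ to $f_0$ produces $f_{\eta+1}=\sigma_\eta f_\eta$, and for limit $\lambda\le\theta$, $f_\lambda(c)$ is the eventually constant value of $f_\eta(c)$ ($\eta<\lambda$) if it exists and NaC otherwise; $f_\theta$ is the terminal configuration. $f$ is accessible from $f_0$ if it is the terminal configuration of some basic sequence applied to $f_0$. The cluster of a cell is its orbit under the group generated by all quarter-turn twists; the six center cells (two coordinates equal to $0$) form the center cluster, and the others are non-center. $D=\{(x,y,+\infty):x\in L,\ y\in\{0\}\cup L\}$; every non-center cluster contains exactly one cell of $D$. *)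

theory Defs
  imports Main
begin

text \<open>The extended index set: L is represented as the universe of a type 'a
  (assumed infinite in the theorem). Pos r = r, Neg r = -r, Zero = 0,
  PInf = +infinity, NInf = -infinity.\<close>

datatype 'a coord = Pos 'a | Neg 'a | Zero | PInf | NInf

fun cneg :: "'a coord \<Rightarrow> 'a coord" where
  "cneg (Pos r) = Neg r"
| "cneg (Neg r) = Pos r"
| "cneg Zero = Zero"
| "cneg PInf = NInf"
| "cneg NInf = PInf"

type_synonym 'a point = "'a coord \<times> 'a coord \<times> 'a coord"

definition is_inf :: "'a coord \<Rightarrow> bool" where
  "is_inf a \<longleftrightarrow> a = PInf \<or> a = NInf"

definition is_cell :: "'a point \<Rightarrow> bool" where
  "is_cell p = (case p of (x, y, z) \<Rightarrow>
     (is_inf x \<and> \<not> is_inf y \<and> \<not> is_inf z) \<or>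
     (\<not> is_inf x \<and> is_inf y \<and> \<not> is_inf z) \<or>
     (\<not> is_inf x \<and> \<not> is_inf y \<and> is_inf z))"

datatype axis = AX | AY | AZ

text \<open>Quarter-turn twist T_{i,alpha} (extended to all points of U; it maps cells to cells).\<close>
fun qturn :: "axis \<Rightarrow> 'a coord \<Rightarrow> 'a point \<Rightarrow> 'a point" where
  "qturn AX a (x, y, z) = (if x = a then (x, cneg z, y) else (x, y, z))"
| "qturn AY a (x, y, z) = (if y = a then (z, y, cneg x) else (x, y, z))"
| "qturn AZ a (x, y, z) = (if z = a then (cneg y, x, z) else (x, y, z))"

definition basic_twist_of :: "axis \<Rightarrow> 'a coord \<Rightarrow> nat \<Rightarrow> 'a point \<Rightarrow> 'a point" where
  "basic_twist_of i a j = qturn i a ^^ j"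

definition is_basic_twist :: "('a point \<Rightarrow> 'a point) \<Rightarrow> bool" where
  "is_basic_twist \<sigma> \<longleftrightarrow> (\<exists>i a j. j \<in> {1,2,3} \<and> \<sigma> = basic_twist_of i a j)"

definition is_face_twist :: "('a point \<Rightarrow> 'a point) \<Rightarrow> bool" where
  "is_face_twist \<sigma> \<longleftrightarrow> (\<exists>i a j. a \<in> {PInf, NInf} \<and> j \<in> {1,2,3} \<and> \<sigma> = basic_twist_of i a j)"

datatype color = Red | White | Green | Orange | Yellow | Blue | NaC

type_synonym 'a config = "'a point \<Rightarrow> color"

definition legal :: "'a config \<Rightarrow> bool" where
  "legal f \<longleftrightarrow> (\<forall>c. is_cell c \<longrightarrow> f c \<noteq> NaC)"

text \<open>Solved configuration (non-cells get the dummy value NaC; they are never used).\<close>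
definition f_solved :: "'a config" where
  "f_solved p = (if \<not> is_cell p then NaC else (case p of (x, y, z) \<Rightarrow>
     if x = PInf then Red else if y = PInf then Blue else if z = PInf then White
     else if x = NInf then Orange else if y = NInf then Green else Yellow))"

definition act :: "('a point \<Rightarrow> 'a point) \<Rightarrow> 'a config \<Rightarrow> 'a config" where
  "act \<sigma> f = (\<lambda>c. f (inv \<sigma> c))"

definition apply_seq :: "('a point \<Rightarrow> 'a point) list \<Rightarrow> 'a config \<Rightarrow> 'a config" where
  "apply_seq s f = foldl (\<lambda>g \<sigma>. act \<sigma> g) f s"

text \<open>Transfinite sequences: the sequence has length theta (an element of a
  well-ordered type 'i, positions are the eta < theta); F eta is the
  configuration f_eta for eta \<le> theta.\<close>
definition is_run :: "('i::wellorder \<Rightarrow> ('a point \<Rightarrow> 'a point)) \<Rightarrow> 'i \<Rightarrow> 'a config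
                       \<Rightarrow> ('i \<Rightarrow> 'a config) \<Rightarrow> bool" where
  "is_run \<sigma> \<theta> f0 F \<longleftrightarrow>
     (\<forall>\<eta>\<le>\<theta>.
        ((\<forall>\<xi>. \<not> \<xi> < \<eta>) \<longrightarrow> F \<eta> = f0) \<and>
        (\<forall>\<xi>. \<xi> < \<eta> \<and> \<not> (\<exists>\<zeta>. \<xi> < \<zeta> \<and> \<zeta> < \<eta>) \<longrightarrow> F \<eta> = act (\<sigma> \<xi>) (F \<xi>)) \<and>
        ((\<exists>\<xi>. \<xi> < \<eta>) \<and> (\<forall>\<xi><\<eta>. \<exists>\<zeta>. \<xi> < \<zeta> \<and> \<zeta> < \<eta>) \<longrightarrow>
           (\<forall>c. F \<eta> c =
              (if \<exists>v. \<exists>\<xi><\<eta>. \<forall>\<zeta>. \<xi> \<le> \<zeta> \<and> \<zeta> < \<eta> \<longrightarrow> F \<zeta> c = v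
               then (THE v. \<exists>\<xi><\<eta>. \<forall>\<zeta>. \<xi> \<le> \<zeta> \<and> \<zeta> < \<eta> \<longrightarrow> F \<zeta> c = v)
               else NaC))))"

text \<open>f is accessible from f0 via a basic sequence indexed by an initial segment
  of the well-ordered type 'i (the theorem quantifies over all such types, so
  all ordinal lengths are covered).\<close>
definition accessible :: "'i::wellorder itself \<Rightarrow> 'a config \<Rightarrow> 'a config \<Rightarrow> bool" where
  "accessible _ f0 f \<longleftrightarrow>
     (\<exists>(\<sigma> :: 'i \<Rightarrow> ('a point \<Rightarrow> 'a point)) \<theta> F.
        (\<forall>\<eta><\<theta>. is_basic_twist (\<sigma> \<eta>)) \<and> is_run \<sigma> \<theta> f0 F \<and> F \<theta> = f)"

inductive_set cluster :: "'a point \<Rightarrow> 'a point set" for c where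
  base: "c \<in> cluster c"
| fwd: "d \<in> cluster c \<Longrightarrow> qturn i a d \<in> cluster c"
| bwd: "d \<in> cluster c \<Longrightarrow> inv (qturn i a) d \<in> cluster c"

definition center_cluster :: "'a point set" where
  "center_cluster = {p. is_cell p \<and> (case p of (x, y, z) \<Rightarrow>
      (x = Zero \<and> y = Zero) \<or> (x = Zero \<and> z = Zero) \<or> (y = Zero \<and> z = Zero))}"

end

theory Submission
  imports Defs
begin

(* A legal configuration accessible from the solved cube agrees, on the finite twist-invariant
   cluster C, with the solved colouring composed with a permutation of C: at a limit stage every
   cell of a finite set is eventually constant unless it becomes NaC.  For \<alpha> \<in> L the cluster
   of (\<alpha>, \<beta>, +\<infinity>) has 24 cells.  A conjugated commutator built from a face twist and the
   slices at \<alpha> and \<beta> acts on the cells as a 3-cycle inside C, and conjugating it by 22 short words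
   gives every 3-cycle (a b x) for two fixed cells a, b, hence every 3-cycle of C.  As each colour
   occurs at least twice in C, 3-cycles suffice to sort the colours of C, and the words used
   consist of face twists and twists of the slices at \<plusminus>\<alpha> and \<plusminus>\<beta>. *)

section \<open>Quarter turns\<close>

lemma cneg_cneg [simp]: "cneg (cneg x) = x"
  by (cases x) auto

lemma cneg_eq_iff [simp]: "cneg x = y \<longleftrightarrow> x = cneg y"
  by (cases x; cases y) auto

lemma is_inf_cneg [simp]: "is_inf (cneg x) = is_inf x"
  by (cases x) (auto simp: is_inf_def)

lemma qturn_4_times [simp]: "qturn i a (qturn i a (qturn i a (qturn i a p))) = p"
  by (cases i; cases p) auto

lemma is_cell_qturn [simp]: "is_cell (qturn i a p) = is_cell p"
  by (cases i; cases p) (auto simp: is_cell_def)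

lemma is_cell_funpow_qturn: "is_cell ((qturn i a ^^ n) p) = is_cell p"
  by (induction n) auto

lemma inv_qturn: "inv (qturn i a) = qturn i a \<circ> qturn i a \<circ> qturn i a"
  by (rule inv_unique_comp) (simp_all add: fun_eq_iff)

lemma basic_twist_of_simps [simp]:
  "basic_twist_of i a (Suc 0) p = qturn i a p"
  "basic_twist_of i a 2 p = qturn i a (qturn i a p)"
  "basic_twist_of i a 3 p = qturn i a (qturn i a (qturn i a p))"
  by (simp_all add: basic_twist_of_def numeral_2_eq_2 numeral_3_eq_3)

lemma inv_basic_twist_of:
  "j \<in> {1, 2, 3} \<Longrightarrow> inv (basic_twist_of i a j) = basic_twist_of i a (4 - j)"
  by (rule inv_unique_comp) (auto simp: fun_eq_iff)

section \<open>Words of twists\<close>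

type_synonym 'a move = "axis \<times> 'a coord \<times> nat"

fun twist :: "'a move \<Rightarrow> 'a point \<Rightarrow> 'a point" where
  "twist (i, a, j) = basic_twist_of i a j"

fun untwist :: "'a move \<Rightarrow> 'a point \<Rightarrow> 'a point" where
  "untwist (i, a, j) = basic_twist_of i a (4 - j)"

definition moves_in :: "'a coord set \<Rightarrow> 'a move list \<Rightarrow> bool" where
  "moves_in L ms \<longleftrightarrow> (\<forall>(i, a, j) \<in> set ms. a \<in> L \<and> j \<in> {1, 2, 3})"

lemma moves_in_simps [simp]:
  "moves_in L []"
  "moves_in L (m # ms) \<longleftrightarrow> fst (snd m) \<in> L \<and> snd (snd m) \<in> {1, 2, 3} \<and> moves_in L ms"
  "moves_in L (ms @ ms') \<longleftrightarrow> moves_in L ms \<and> moves_in L ms'"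
  by (auto simp: moves_in_def split: prod.splits)

lemma moves_in_mono: "moves_in L ms \<Longrightarrow> L \<subseteq> L' \<Longrightarrow> moves_in L' ms"
  by (auto simp: moves_in_def)

lemma act_basic_twist_of:
  "j \<in> {1, 2, 3} \<Longrightarrow> act (basic_twist_of i a j) f = f \<circ> untwist (i, a, j)"
  by (simp add: act_def inv_basic_twist_of comp_def del: basic_twist_of_simps)

primrec origin :: "'a move list \<Rightarrow> 'a point \<Rightarrow> 'a point" where
  "origin [] p = p"
| "origin (m # ms) p = untwist m (origin ms p)"

lemma origin_append: "origin (ms @ ms') p = origin ms (origin ms' p)"
  by (induction ms) auto

lemma apply_seq_twists:
  "moves_in UNIV ms \<Longrightarrow> apply_seq (map twist ms) f = f \<circ> origin ms"
proof (induction ms arbitrary: f)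
  case Nil
  then show ?case by (simp add: apply_seq_def fun_eq_iff)
next
  case (Cons m ms)
  have "apply_seq (map twist (m # ms)) f = apply_seq (map twist ms) (f \<circ> untwist m)"
    using Cons.prems by (cases m) (simp add: apply_seq_def act_basic_twist_of del: untwist.simps)
  then show ?case using Cons by (simp add: comp_def)
qed

lemma is_cell_origin [simp]: "is_cell (origin ms p) = is_cell p"
proof (induction ms)
  case (Cons m ms)
  then show ?case by (cases m) (simp add: basic_twist_of_def is_cell_funpow_qturn)
qed simp

lemma funpow_qturn_closed:
  assumes "\<And>d i a. d \<in> C \<Longrightarrow> qturn i a d \<in> C" and "d \<in> C"
  shows "(qturn i a ^^ n) d \<in> C"
  by (induction n) (simp_all add: assms)

lemma origin_closed:
  assumes "\<And>d i a. d \<in> C \<Longrightarrow> qturn i a d \<in> C" and "d \<in> C"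
  shows "origin ms d \<in> C"
proof (induction ms)
  case (Cons m ms)
  then show ?case
    by (cases m) (simp add: basic_twist_of_def funpow_qturn_closed assms(1) del: basic_twist_of_simps)
qed (simp add: assms(2))

definition inverse_word :: "'a move list \<Rightarrow> 'a move list" where
  "inverse_word ms = rev (map (\<lambda>(i, a, j). (i, a, 4 - j)) ms)"

lemma moves_in_inverse_word: "moves_in L ms \<Longrightarrow> moves_in L (inverse_word ms)"
  by (auto simp: moves_in_def inverse_word_def)

lemma origin_inverse_word:
  "moves_in L ms \<Longrightarrow> origin ms (origin (inverse_word ms) p) = p"
  "moves_in L ms \<Longrightarrow> origin (inverse_word ms) (origin ms p) = p"
  by (induction ms arbitrary: p)
    (auto simp: inverse_word_def origin_append)

lemma bij_betw_origin:
  assumes closed: "\<And>d i a. d \<in> C \<Longrightarrow> qturn i a d \<in> C" and "moves_in L ms"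
  shows "bij_betw (origin ms) C C"
  by (rule bij_betw_byWitness[where f' = "origin (inverse_word ms)"])
    (auto simp: origin_inverse_word[OF assms(2)] intro: origin_closed[OF closed])

section \<open>Clusters\<close>

lemma cluster_trans: "e \<in> cluster d \<Longrightarrow> d \<in> cluster c \<Longrightarrow> e \<in> cluster c"
  by (induction e rule: cluster.induct) (auto intro: cluster.intros)

lemma cluster_sym: "d \<in> cluster c \<Longrightarrow> c \<in> cluster d"
proof (induction d rule: cluster.induct)
  case (fwd d i a)
  have "qturn i a (qturn i a (qturn i a (qturn i a d))) \<in> cluster (qturn i a d)"
    by (intro cluster.fwd cluster.base)
  then have "d \<in> cluster (qturn i a d)" by simp
  then show ?case using fwd.IH cluster_trans by blast
next
  case (bwd d i a)
  have "qturn i a (inv (qturn i a) d) \<in> cluster (inv (qturn i a) d)"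
    by (intro cluster.fwd cluster.base)
  then have "d \<in> cluster (inv (qturn i a) d)" by (simp add: inv_qturn)
  then show ?case using bwd.IH cluster_trans by blast
qed (rule cluster.base)

lemma cluster_eq: "d \<in> cluster c \<Longrightarrow> cluster d = cluster c"
  using cluster_trans cluster_sym by blast

lemma cluster_subset:
  assumes "c \<in> S" and closed: "\<And>d i a. d \<in> S \<Longrightarrow> qturn i a d \<in> S"
  shows "cluster c \<subseteq> S"
proof
  show "d \<in> S" if "d \<in> cluster c" for d
    using that by induction (simp_all add: assms inv_qturn)
qed

lemma origin_in_cluster: "d \<in> cluster c \<Longrightarrow> origin ms d \<in> cluster c"
  by (rule origin_closed) (rule cluster.fwd)

section \<open>Three-cycles\<close>

definition cyc3 :: "'b \<Rightarrow> 'b \<Rightarrow> 'b \<Rightarrow> 'b \<Rightarrow> 'b" where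
  "cyc3 a b c p = (if p = a then b else if p = b then c else if p = c then a else p)"

lemma cyc3_image: "inj g \<Longrightarrow> g (cyc3 a b c p) = cyc3 (g a) (g b) (g c) (g p)"
  by (auto simp: cyc3_def inj_eq)

lemma cyc3_inverse: "distinct [a, b, c] \<Longrightarrow> cyc3 a c b (cyc3 a b c p) = p"
  by (auto simp: cyc3_def)

lemma cyc3_in_iff: "{a, b, c} \<subseteq> C \<Longrightarrow> cyc3 a b c p \<in> C \<longleftrightarrow> p \<in> C"
  by (auto simp: cyc3_def)

lemma bij_betw_cyc3:
  assumes "{a, b, c} \<subseteq> C" "distinct [a, b, c]"
  shows "bij_betw (cyc3 a b c) C C"
proof (rule bij_betw_byWitness[where f' = "cyc3 a c b"])
  have "distinct [a, c, b]" using assms(2) by auto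
  then show "\<forall>p\<in>C. cyc3 a c b (cyc3 a b c p) = p" "\<forall>p\<in>C. cyc3 a b c (cyc3 a c b p) = p"
    using cyc3_inverse[OF assms(2)] cyc3_inverse[of a c b] by auto
  show "cyc3 a b c ` C \<subseteq> C" "cyc3 a c b ` C \<subseteq> C"
    using assms(1) cyc3_in_iff[of a b c C] cyc3_in_iff[of a c b C] by auto
qed

lemma cyc3_same_points:
  assumes comp: "\<And>V W. V \<in> R \<Longrightarrow> W \<in> R \<Longrightarrow> V \<circ> W \<in> R"
    and "cyc3 u v w \<in> R" and "{a, b, c} \<subseteq> {u, v, w}" and "distinct [a, b, c]"
  shows "cyc3 a b c \<in> R"
proof -
  have "cyc3 a b c = cyc3 u v w \<or> cyc3 a b c = cyc3 u v w \<circ> cyc3 u v w"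
    using assms(3,4) by (auto simp: cyc3_def fun_eq_iff)
  then show ?thesis using assms(1,2) by metis
qed

lemma three_cycles_from_pair:
  assumes comp: "\<And>V W. V \<in> R \<Longrightarrow> W \<in> R \<Longrightarrow> V \<circ> W \<in> R"
    and "a \<noteq> b"
    and pair: "\<And>x. x \<in> C \<Longrightarrow> x \<noteq> a \<Longrightarrow> x \<noteq> b \<Longrightarrow> cyc3 a b x \<in> R"
    and xyz: "x \<in> C" "y \<in> C" "z \<in> C" "distinct [x, y, z]"
  shows "cyc3 x y z \<in> R"
proof -
  have a_first: "cyc3 a v w \<in> R" if "v \<in> C" "w \<in> C" "distinct [a, v, w]" for v w
  proof -
    consider (b_second) "v = b" | (b_third) "w = b" | (b_absent) "b \<notin> {v, w}" by blast
    then show ?thesis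
    proof cases
      case b_second
      then show ?thesis using pair that by auto
    next
      case b_third
      have "cyc3 a v b = cyc3 a b v \<circ> cyc3 a b v"
        using that b_third by (auto simp: cyc3_def fun_eq_iff)
      moreover have "cyc3 a b v \<in> R" using pair that b_third by auto
      ultimately show ?thesis using comp b_third by metis
    next
      case b_absent
      have "cyc3 a v w = cyc3 a b w \<circ> (cyc3 a b v \<circ> cyc3 a b v)"
        using that b_absent \<open>a \<noteq> b\<close> by (auto simp: cyc3_def fun_eq_iff)
      moreover have "cyc3 a b v \<in> R" "cyc3 a b w \<in> R" using pair that b_absent by auto
      ultimately show ?thesis using comp by metis
    qed
  qed
  have rot: "cyc3 x y z = cyc3 y z x" "cyc3 x y z = cyc3 z x y"
    using xyz(4) by (auto simp: cyc3_def fun_eq_iff)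
  consider "a = x" | "a = y" | "a = z" | "a \<notin> {x, y, z}"
    by blast
  then show ?thesis
  proof cases
    case 1
    then show ?thesis using a_first[of y z] xyz by auto
  next
    case 2
    then have "cyc3 y z x \<in> R" using a_first[of z x] xyz by auto
    then show ?thesis by (simp only: rot(1))
  next
    case 3
    then have "cyc3 z x y \<in> R" using a_first[of x y] xyz by auto
    then show ?thesis by (simp only: rot(2))
  next
    case 4
    have "cyc3 x y z = cyc3 a x y \<circ> cyc3 a y z"
      using 4 xyz(4) by (auto simp: cyc3_def fun_eq_iff)
    moreover have "cyc3 a x y \<in> R" "cyc3 a y z \<in> R"
      using a_first 4 xyz by auto
    ultimately show ?thesis using comp by metis
  qed
qed

lemma card_fibre_comp_bij:
  assumes "bij_betw \<sigma> C C"
  shows "card {p \<in> C. h (\<sigma> p) = k} = card {p \<in> C. h p = k}"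
proof -
  have inj: "inj_on \<sigma> C" and img: "\<sigma> ` C = C"
    using assms by (simp_all add: bij_betw_def)
  have "\<sigma> ` {p \<in> C. h (\<sigma> p) = k} = {q \<in> \<sigma> ` C. h q = k}"
    by blast
  then have "card {p \<in> C. h p = k} = card (\<sigma> ` {p \<in> C. h (\<sigma> p) = k})"
    by (simp add: img)
  also have "\<dots> = card {p \<in> C. h (\<sigma> p) = k}"
    by (rule card_image) (rule inj_on_subset[OF inj], blast)
  finally show ?thesis ..
qed

(* Induction on the number of misplaced colours, each step fixing one more cell by a 3-cycle.
   That every colour occurs twice replaces the parity condition for sorting by 3-cycles. *)
lemma sort_by_three_cycles:
  fixes h col :: "'b \<Rightarrow> 'c"
  assumes fin: "finite C"
    and comp: "\<And>V W. V \<in> R \<Longrightarrow> W \<in> R \<Longrightarrow> V \<circ> W \<in> R" and "id \<in> R"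
    and cycles: "\<And>x y z. x \<in> C \<Longrightarrow> y \<in> C \<Longrightarrow> z \<in> C \<Longrightarrow> distinct [x, y, z] \<Longrightarrow> cyc3 x y z \<in> R"
    and partner: "\<And>d. d \<in> C \<Longrightarrow> \<exists>d' \<in> C. d' \<noteq> d \<and> col d' = col d"
    and counts: "\<And>k. card {p \<in> C. h p = k} = card {p \<in> C. col p = k}"
  shows "\<exists>V \<in> R. (\<forall>p. p \<notin> C \<longrightarrow> V p = p) \<and> (\<forall>d \<in> C. h (V d) = col d)"
  using counts
proof (induction "card {p \<in> C. h p \<noteq> col p}" arbitrary: h rule: less_induct)
  case less
  show ?case
  proof (cases "\<forall>d \<in> C. h d = col d")
    case True
    then show ?thesis using \<open>id \<in> R\<close> by (intro bexI[of _ id]) auto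
  next
    case False
    then obtain d where d: "d \<in> C" "h d \<noteq> col d" by blast
    obtain e where e: "e \<in> C" "h e = col d" "col e \<noteq> col d"
    proof (rule ccontr)
      assume "\<not> thesis"
      then have "{p \<in> C. h p = col d} \<subseteq> {p \<in> C. col p = col d} - {d}"
        using that d by auto
      then have "card {p \<in> C. h p = col d} \<le> card ({p \<in> C. col p = col d} - {d})"
        using fin by (intro card_mono) auto
      also have "\<dots> < card {p \<in> C. col p = col d}"
        using fin d by (intro card_Diff1_less) auto
      finally show False using less.prems by simp
    qed
    obtain x where x: "x \<in> C" "x \<noteq> e" "col x = h d"
    proof -
      have "card {p \<in> C. col p = h d} = card {p \<in> C. h p = h d}" using less.prems by simp
      also have "\<dots> \<noteq> 0" using fin d by (auto simp: card_eq_0_iff)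
      finally obtain y where y: "y \<in> C" "col y = h d"
        by (auto simp: card_eq_0_iff)
      with partner obtain y' where "y' \<in> C" "y' \<noteq> y" "col y' = h d" by metis
      with y that show thesis by metis
    qed
    have distinct: "distinct [d, e, x]" using d e x by auto
    define \<sigma> where "\<sigma> = cyc3 d e x"
    have bij: "bij_betw \<sigma> C C"
      unfolding \<sigma>_def by (rule bij_betw_cyc3) (use d e x distinct in auto)
    have fewer: "{p \<in> C. h (\<sigma> p) \<noteq> col p} \<subseteq> {p \<in> C. h p \<noteq> col p} - {d}"
      using d e x distinct by (auto simp: \<sigma>_def cyc3_def)
    have "{p \<in> C. h (\<sigma> p) \<noteq> col p} \<subset> {p \<in> C. h p \<noteq> col p}"
      using fewer d by blast
    then have "card {p \<in> C. h (\<sigma> p) \<noteq> col p} < card {p \<in> C. h p \<noteq> col p}"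
      using fin by (intro psubset_card_mono) auto
    moreover have "card {p \<in> C. h (\<sigma> p) = k} = card {p \<in> C. col p = k}" for k
      using card_fibre_comp_bij[OF bij] less.prems by metis
    ultimately obtain V where V: "V \<in> R" "\<forall>p. p \<notin> C \<longrightarrow> V p = p" "\<forall>d \<in> C. h (\<sigma> (V d)) = col d"
      using less.hyps[of "h \<circ> \<sigma>"] by auto
    have "\<sigma> \<in> R" unfolding \<sigma>_def using cycles d e x distinct by blast
    moreover have "\<forall>p. p \<notin> C \<longrightarrow> (\<sigma> \<circ> V) p = p"
      using V(2) d e x by (auto simp: \<sigma>_def cyc3_def)
    ultimately show ?thesis using comp V by (intro bexI[of _ "\<sigma> \<circ> V"]) auto
  qed
qed

section \<open>Permutations realizable by twists\<close>

(* Words also move the non-cell points of U; only their action on cells matters. *)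
definition realizable :: "'a coord set \<Rightarrow> ('a point \<Rightarrow> 'a point) \<Rightarrow> bool" where
  "realizable L V \<longleftrightarrow> (\<exists>ms. moves_in L ms \<and> (\<forall>p. is_cell p \<longrightarrow> origin ms p = V p))"

lemma realizable_id: "realizable L id"
  by (auto simp: realizable_def intro: exI[of _ "[]"])

lemma realizable_comp:
  assumes "realizable L V" and "realizable L W"
  shows "realizable L (V \<circ> W)"
proof -
  obtain ms ms' where "moves_in L ms" "\<forall>p. is_cell p \<longrightarrow> origin ms p = V p"
    and "moves_in L ms'" "\<forall>p. is_cell p \<longrightarrow> origin ms' p = W p"
    using assms unfolding realizable_def by blast
  then show ?thesis
    unfolding realizable_def
    by (intro exI[of _ "ms @ ms'"]) (metis comp_apply is_cell_origin moves_in_simps(3) origin_append)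
qed

lemma realizable_cyc3_conj:
  assumes "realizable L (cyc3 p q r)" and w: "moves_in L w"
  shows "realizable L (cyc3 (origin w p) (origin w q) (origin w r))"
proof -
  obtain ms where ms: "moves_in L ms" "\<forall>p'. is_cell p' \<longrightarrow> origin ms p' = cyc3 p q r p'"
    using assms(1) unfolding realizable_def by blast
  have "inj (origin w)"
    by (metis injI origin_inverse_word(2)[OF w])
  have "origin (w @ ms @ inverse_word w) x = cyc3 (origin w p) (origin w q) (origin w r) x"
    if "is_cell x" for x
  proof -
    let ?y = "origin (inverse_word w) x"
    have "origin ms ?y = cyc3 p q r ?y"
      using ms(2) that is_cell_origin by blast
    then have "origin (w @ ms @ inverse_word w) x = origin w (cyc3 p q r ?y)"
      by (simp add: origin_append)
    also have "\<dots> = cyc3 (origin w p) (origin w q) (origin w r) x"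
      using cyc3_image[OF \<open>inj (origin w)\<close>] by (simp add: origin_inverse_word(1)[OF w])
    finally show ?thesis .
  qed
  moreover have "moves_in L (w @ ms @ inverse_word w)"
    using ms(1) w by (simp add: moves_in_inverse_word)
  ultimately show ?thesis unfolding realizable_def by blast
qed

section \<open>Transfinite runs\<close>

lemma run_limit_on_finite:
  fixes \<sigma> :: "'i::wellorder \<Rightarrow> 'a point \<Rightarrow> 'a point"
  assumes fin: "finite C" and run: "is_run \<sigma> \<theta> f0 F" and "\<eta> \<le> \<theta>"
    and lim: "\<exists>\<xi>. \<xi> < \<eta>" "\<forall>\<xi><\<eta>. \<exists>\<zeta>. \<xi> < \<zeta> \<and> \<zeta> < \<eta>"
  shows "(\<exists>\<xi><\<eta>. \<forall>d\<in>C. F \<eta> d = F \<xi> d) \<or> (\<exists>d\<in>C. F \<eta> d = NaC)"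
proof -
  let ?limit = "\<lambda>d v. \<exists>\<xi><\<eta>. \<forall>\<zeta>. \<xi> \<le> \<zeta> \<and> \<zeta> < \<eta> \<longrightarrow> F \<zeta> d = v"
  have F_lim: "F \<eta> d = (if \<exists>v. ?limit d v then THE v. ?limit d v else NaC)" for d
    using run assms(3) lim unfolding is_run_def by blast
  show ?thesis
  proof (cases "\<forall>d\<in>C. \<exists>v. ?limit d v")
    case False
    then obtain d where "d \<in> C" "\<not> (\<exists>v. ?limit d v)" by blast
    then have "F \<eta> d = NaC" by (simp only: F_lim if_False)
    then show ?thesis using \<open>d \<in> C\<close> by blast
  next
    case True
    then obtain v g where g: "\<And>d. d \<in> C \<Longrightarrow> g d < \<eta> \<and> (\<forall>\<zeta>. g d \<le> \<zeta> \<and> \<zeta> < \<eta> \<longrightarrow> F \<zeta> d = v d)"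
      by metis
    obtain \<xi> where "\<xi> < \<eta>" using lim(1) by blast
    define \<xi>0 where "\<xi>0 = Max (insert \<xi> (g ` C))"
    have "\<xi>0 < \<eta>" using fin g \<open>\<xi> < \<eta>\<close> by (simp add: \<xi>0_def)
    have stable: "F \<zeta> d = v d" if "d \<in> C" "\<xi>0 \<le> \<zeta>" "\<zeta> < \<eta>" for d \<zeta>
    proof -
      have "g d \<le> \<xi>0" using fin that(1) by (simp add: \<xi>0_def)
      then show ?thesis using g[OF that(1)] order_trans[of "g d" \<xi>0 \<zeta>] that by blast
    qed
    have "F \<eta> d = v d" if "d \<in> C" for d
    proof -
      have limit_d: "?limit d (v d)" using stable that \<open>\<xi>0 < \<eta>\<close> by blast
      have "(THE v. ?limit d v) = v d"
      proof (rule the_equality)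
        fix v' assume "?limit d v'"
        then obtain \<xi>1 where "\<xi>1 < \<eta>" "\<forall>\<zeta>. \<xi>1 \<le> \<zeta> \<and> \<zeta> < \<eta> \<longrightarrow> F \<zeta> d = v'" by blast
        then show "v' = v d"
          using stable[OF that, of "max \<xi>1 \<xi>0"] \<open>\<xi>0 < \<eta>\<close> by simp
      qed (rule limit_d)
      then show ?thesis using F_lim[of d] limit_d by auto
    qed
    then show ?thesis using stable \<open>\<xi>0 < \<eta>\<close> by auto
  qed
qed

lemma run_on_closed_finite_set:
  fixes \<sigma> :: "'i::wellorder \<Rightarrow> 'a point \<Rightarrow> 'a point"
  assumes fin: "finite C" and closed: "\<And>d i a. d \<in> C \<Longrightarrow> qturn i a d \<in> C"
    and run: "is_run \<sigma> \<theta> f0 F" and basic: "\<forall>\<eta><\<theta>. is_basic_twist (\<sigma> \<eta>)"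
  shows "\<eta> \<le> \<theta> \<Longrightarrow>
    (\<exists>ms. moves_in UNIV ms \<and> (\<forall>d\<in>C. F \<eta> d = f0 (origin ms d))) \<or> (\<exists>d\<in>C. F \<eta> d = NaC)"
proof (induction \<eta> rule: less_induct)
  case (less \<eta>)
  note step = run[unfolded is_run_def, rule_format, OF less.prems]
  consider (zero) "\<forall>\<xi>. \<not> \<xi> < \<eta>"
    | (succ) \<xi> where "\<xi> < \<eta>" "\<not> (\<exists>\<zeta>. \<xi> < \<zeta> \<and> \<zeta> < \<eta>)"
    | (limit) "\<exists>\<xi>. \<xi> < \<eta>" "\<forall>\<xi><\<eta>. \<exists>\<zeta>. \<xi> < \<zeta> \<and> \<zeta> < \<eta>"
    by blast
  then show ?case
  proof cases
    case zero
    then show ?thesis using step by (intro disjI1 exI[of _ "[]"]) auto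
  next
    case succ
    have "\<xi> < \<theta>" using succ(1) less.prems by (rule less_le_trans)
    then obtain i a j where j: "j \<in> {1, 2, 3}" and \<sigma>: "\<sigma> \<xi> = basic_twist_of i a j"
      using basic unfolding is_basic_twist_def by blast
    have F: "F \<eta> = F \<xi> \<circ> untwist (i, a, j)"
      using step succ \<sigma> j by (simp add: act_basic_twist_of del: untwist.simps)
    have IH: "(\<exists>ms. moves_in UNIV ms \<and> (\<forall>d\<in>C. F \<xi> d = f0 (origin ms d))) \<or> (\<exists>d\<in>C. F \<xi> d = NaC)"
      using less.IH[OF succ(1)] \<open>\<xi> < \<theta>\<close> by simp
    then show ?thesis
    proof (elim disjE exE bexE conjE)
      fix ms assume ms: "moves_in UNIV ms" "\<forall>d\<in>C. F \<xi> d = f0 (origin ms d)"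
      have "\<forall>d\<in>C. F \<eta> d = f0 (origin (ms @ [(i, a, j)]) d)"
        using ms(2) origin_closed[OF closed, of _ "[(i, a, j)]"] by (simp add: F origin_append)
      moreover have "moves_in UNIV (ms @ [(i, a, j)])" using ms(1) j by simp
      ultimately show ?thesis by blast
    next
      fix d assume d: "d \<in> C" "F \<xi> d = NaC"
      have "basic_twist_of i a j d \<in> C"
        using funpow_qturn_closed[OF closed d(1)] by (simp add: basic_twist_of_def del: basic_twist_of_simps)
      moreover have "F \<eta> (basic_twist_of i a j d) = NaC"
        using d(2) j by (auto simp: F)
      ultimately show ?thesis by blast
    qed
  next
    case limit
    then have "(\<exists>\<xi><\<eta>. \<forall>d\<in>C. F \<eta> d = F \<xi> d) \<or> (\<exists>d\<in>C. F \<eta> d = NaC)"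
      using run_limit_on_finite[OF fin run less.prems] by blast
    then show ?thesis
    proof (elim disjE exE bexE conjE)
      fix \<xi> assume "\<xi> < \<eta>" "\<forall>d\<in>C. F \<eta> d = F \<xi> d"
      then show ?thesis using less.IH[of \<xi>] less.prems by auto
    qed blast
  qed
qed

lemma solve_closed_set:
  fixes f :: "'a config"
  assumes fin: "finite C" and cells: "\<And>d. d \<in> C \<Longrightarrow> is_cell d"
    and closed: "\<And>d i a. d \<in> C \<Longrightarrow> qturn i a d \<in> C"
    and partner: "\<And>d. d \<in> C \<Longrightarrow> \<exists>d' \<in> C. d' \<noteq> d \<and> f_solved d' = f_solved d"
    and cycles: "\<And>x y z. x \<in> C \<Longrightarrow> y \<in> C \<Longrightarrow> z \<in> C \<Longrightarrow> distinct [x, y, z] \<Longrightarrow>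
      realizable L (cyc3 x y z)"
    and "legal f" and "accessible TYPE('i::wellorder) f_solved f"
  shows "\<exists>ms. moves_in L ms \<and> (\<forall>d \<in> C. apply_seq (map twist ms) f d = f_solved d) \<and>
    (\<forall>d. is_cell d \<and> d \<notin> C \<longrightarrow> apply_seq (map twist ms) f d = f d)"
proof -
  obtain \<sigma> :: "'i \<Rightarrow> 'a point \<Rightarrow> 'a point" and \<theta> F where
    basic: "\<forall>\<eta><\<theta>. is_basic_twist (\<sigma> \<eta>)" and run: "is_run \<sigma> \<theta> f_solved F" and "F \<theta> = f"
    using \<open>accessible TYPE('i) f_solved f\<close> unfolding accessible_def by blast
  have "(\<exists>ms. moves_in UNIV ms \<and> (\<forall>d \<in> C. f d = f_solved (origin ms d))) \<or> (\<exists>d \<in> C. f d = NaC)"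
    using run_on_closed_finite_set[OF fin closed run basic order_refl] \<open>F \<theta> = f\<close> by simp
  moreover have "\<not> (\<exists>d \<in> C. f d = NaC)"
    using \<open>legal f\<close> cells unfolding legal_def by auto
  ultimately obtain ms0 where ms0: "moves_in UNIV ms0" "\<forall>d \<in> C. f d = f_solved (origin ms0 d)"
    by blast
  have counts: "card {p \<in> C. f p = k} = card {p \<in> C. f_solved p = k}" for k
  proof -
    have "{p \<in> C. f p = k} = {p \<in> C. f_solved (origin ms0 p) = k}" using ms0(2) by auto
    then show ?thesis using card_fibre_comp_bij[OF bij_betw_origin[OF closed ms0(1)]] by simp
  qed
  have "\<exists>V \<in> Collect (realizable L). (\<forall>p. p \<notin> C \<longrightarrow> V p = p) \<and> (\<forall>d \<in> C. f (V d) = f_solved d)"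
    by (rule sort_by_three_cycles[OF fin _ _ _ partner counts])
      (simp_all add: realizable_comp realizable_id cycles)
  then obtain V ms where V: "\<forall>p. p \<notin> C \<longrightarrow> V p = p" "\<forall>d \<in> C. f (V d) = f_solved d"
    and ms: "moves_in L ms" "\<forall>p. is_cell p \<longrightarrow> origin ms p = V p"
    unfolding realizable_def by blast
  have apply_ms: "apply_seq (map twist ms) f d = f (origin ms d)" for d
    using apply_seq_twists[OF moves_in_mono[OF ms(1) subset_UNIV]] by simp
  show ?thesis
  proof (intro exI conjI allI ballI impI)
    show "moves_in L ms" by (fact ms(1))
  next
    fix d assume "d \<in> C"
    then show "apply_seq (map twist ms) f d = f_solved d" using apply_ms ms(2)[rule_format] V(2) cells by simp
  next
    fix d assume "is_cell d \<and> d \<notin> C"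
    then show "apply_seq (map twist ms) f d = f d" using apply_ms ms(2)[rule_format] V(1)[rule_format] by simp
  qed
qed

section \<open>The cluster of (\<alpha>, \<beta>, +\<infinity>)\<close>

(* The orbit of (\<alpha>, \<beta>, +\<infinity>) under the 24 rotations of the cube. *)
definition cluster_cells :: "'a coord \<Rightarrow> 'a coord \<Rightarrow> 'a point set" where
  "cluster_cells \<alpha> \<beta> =
    {(\<alpha>, \<beta>, PInf), (cneg \<beta>, \<alpha>, PInf), (cneg \<alpha>, cneg \<beta>, PInf), (\<beta>, cneg \<alpha>, PInf),
     (\<alpha>, cneg \<beta>, NInf), (\<beta>, \<alpha>, NInf), (cneg \<alpha>, \<beta>, NInf), (cneg \<beta>, cneg \<alpha>, NInf),
     (PInf, \<alpha>, \<beta>), (PInf, cneg \<beta>, \<alpha>), (PInf, cneg \<alpha>, cneg \<beta>), (PInf, \<beta>, cneg \<alpha>),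
     (NInf, \<alpha>, cneg \<beta>), (NInf, \<beta>, \<alpha>), (NInf, cneg \<alpha>, \<beta>), (NInf, cneg \<beta>, cneg \<alpha>),
     (\<beta>, PInf, \<alpha>), (\<alpha>, PInf, cneg \<beta>), (cneg \<beta>, PInf, cneg \<alpha>), (cneg \<alpha>, PInf, \<beta>),
     (\<alpha>, NInf, \<beta>), (cneg \<beta>, NInf, \<alpha>), (cneg \<alpha>, NInf, cneg \<beta>), (\<beta>, NInf, cneg \<alpha>)}"

lemma qturn_cluster_cells: "d \<in> cluster_cells \<alpha> \<beta> \<Longrightarrow> qturn i \<gamma> d \<in> cluster_cells \<alpha> \<beta>"
  unfolding cluster_cells_def by (cases i; elim insertE emptyE; simp)

lemma is_cell_cluster_cells:
  "\<beta> \<in> insert Zero (range Pos) \<Longrightarrow> d \<in> cluster_cells (Pos r) \<beta> \<Longrightarrow> is_cell d"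
  unfolding cluster_cells_def by (elim insertE emptyE) (auto simp: is_cell_def is_inf_def)

definition half_turn :: "'a point \<Rightarrow> 'a point" where
  "half_turn p = (case p of (x, y, z) \<Rightarrow>
     if is_inf z then (cneg x, cneg y, z)
     else if is_inf y then (cneg x, y, cneg z)
     else (x, cneg y, cneg z))"

lemma half_turn_cluster_cells:
  assumes "\<beta> \<in> insert Zero (range Pos)" and "d \<in> cluster_cells (Pos r) \<beta>"
  shows "half_turn d \<in> cluster_cells (Pos r) \<beta> \<and> half_turn d \<noteq> d \<and> f_solved (half_turn d) = f_solved d"
proof -
  have "\<beta> \<noteq> PInf" "\<beta> \<noteq> NInf" using assms(1) by auto
  then show ?thesis
    using assms(2) unfolding cluster_cells_def
    by (elim insertE emptyE) (simp_all add: half_turn_def f_solved_def is_cell_def is_inf_def)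
qed

(* Its origin map is v\<inverse> \<circ> (h\<inverse> \<circ> w\<inverse> \<circ> h \<circ> w) \<circ> v, where u, v, w are the quarter turns of the
   x-face at +\<infinity>, the y-slice at \<alpha> and the x-slice at \<beta>, and h = v \<circ> u \<circ> v\<inverse>. *)
definition three_cycle_word :: "'a coord \<Rightarrow> 'a coord \<Rightarrow> 'a move list" where
  "three_cycle_word \<alpha> \<beta> = [(AX, PInf, 1), (AY, \<alpha>, 1), (AX, \<beta>, 1), (AY, \<alpha>, 3),
     (AX, PInf, 3), (AY, \<alpha>, 1), (AX, \<beta>, 3), (AY, \<alpha>, 3)]"

lemma coord_cases:
  "x = Pos r \<or> x = Neg r \<or> x = Pos s \<or> x = Neg s \<or> x = Zero \<or> x = PInf \<or> x = NInf \<or>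
   x \<notin> {Pos r, Neg r, Pos s, Neg s, Zero, PInf, NInf}"
  by blast

lemma origin_three_cycle_word:
  assumes "\<beta> \<in> insert Zero (range Pos)" and "is_cell p"
  shows "origin (three_cycle_word (Pos r) \<beta>) p = cyc3 (\<beta>, NInf, Neg r) (PInf, Pos r, \<beta>) (PInf, \<beta>, Neg r) p"
proof -
  obtain x y z where p: "p = (x, y, z)" by (cases p)
  obtain s where "\<beta> = Zero \<or> \<beta> = Pos s" using assms(1) by blast
  then consider "\<beta> = Zero \<or> \<beta> = Pos r" | "\<beta> = Pos s" "s \<noteq> r" by blast
  then show ?thesis
  proof cases
    case 1
    then show ?thesis
      using coord_cases[of x r r] coord_cases[of y r r] coord_cases[of z r r] assms(2)
      by (elim disjE) (simp_all add: p three_cycle_word_def cyc3_def is_cell_def is_inf_def)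
  next
    case 2
    then show ?thesis
      using coord_cases[of x r s] coord_cases[of y r s] coord_cases[of z r s] assms(2)
      by (elim disjE) (simp_all add: p three_cycle_word_def cyc3_def is_cell_def is_inf_def)
  qed
qed

(* Found by a breadth-first computer search; one list serves for \<beta> = 0, \<beta> = \<alpha> and \<beta> \<noteq> \<alpha>. *)
definition conjugators :: "'a coord \<Rightarrow> 'a coord \<Rightarrow> 'a move list list" where
  "conjugators \<alpha> \<beta> =
    [[(AY, \<beta>, 1), (AX, PInf, 1)],
     [(AY, \<beta>, 1), (AZ, \<beta>, 1)],
     [(AY, \<beta>, 1), (AZ, \<beta>, 2)],
     [(AY, \<beta>, 1), (AZ, \<beta>, 3)],
     [(AY, \<beta>, 1), (AY, cneg \<alpha>, 1), (AX, PInf, 1)],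
     [(AZ, PInf, 3), (AY, cneg \<alpha>, 1), (AX, PInf, 1)],
     [(AY, \<beta>, 1), (AY, cneg \<alpha>, 3), (AX, PInf, 1)],
     [(AX, PInf, 1), (AY, \<beta>, 1), (AX, PInf, 1)],
     [(AX, PInf, 2), (AY, \<beta>, 1), (AX, PInf, 1)],
     [(AZ, PInf, 1), (AY, \<alpha>, 1), (AZ, cneg \<alpha>, 1)],
     [(AY, \<beta>, 1), (AY, NInf, 3), (AZ, \<beta>, 1)],
     [(AY, \<beta>, 1), (AX, NInf, 1), (AZ, \<beta>, 2)],
     [(AX, NInf, 1), (AY, \<beta>, 1), (AZ, \<beta>, 2)],
     [(AX, NInf, 2), (AY, \<beta>, 1), (AZ, \<beta>, 2)],
     [(AY, \<beta>, 1), (AY, PInf, 1), (AZ, \<beta>, 3)],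
     [(AY, \<beta>, 1), (AY, PInf, 2), (AZ, \<beta>, 3)],
     [(AY, \<beta>, 1), (AY, PInf, 3), (AZ, \<beta>, 3)],
     [(AX, cneg \<alpha>, 3), (AY, \<beta>, 1), (AZ, \<beta>, 3)],
     [(AZ, PInf, 3), (AY, \<beta>, 1), (AY, cneg \<alpha>, 1), (AX, PInf, 1)],
     [(AZ, NInf, 2), (AY, \<beta>, 1), (AY, cneg \<alpha>, 3), (AX, PInf, 1)],
     [(AZ, NInf, 3), (AY, \<beta>, 1), (AY, cneg \<alpha>, 3), (AX, PInf, 1)],
     [(AZ, \<alpha>, 1), (AX, PInf, 1), (AY, \<beta>, 1), (AX, PInf, 1)]]"

lemma conjugators_cover:
  fixes r :: 'a
  assumes "\<beta> \<in> insert Zero (range Pos)"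
  defines "T \<equiv> {(\<beta>, NInf, Neg r), (PInf, Pos r, \<beta>), (PInf, \<beta>, Neg r)}"
  shows "\<forall>w \<in> set (conjugators (Pos r) \<beta>). {(Pos r, \<beta>, PInf), (\<beta>, NInf, Neg r)} \<subseteq> origin w ` T"
    and "cluster_cells (Pos r) \<beta> \<subseteq> (\<Union>w \<in> set (conjugators (Pos r) \<beta>). origin w ` T)"
proof -
  obtain s where "\<beta> = Zero \<or> \<beta> = Pos s" using assms(1) by blast
  then show "\<forall>w \<in> set (conjugators (Pos r) \<beta>). {(Pos r, \<beta>, PInf), (\<beta>, NInf, Neg r)} \<subseteq> origin w ` T"
    and "cluster_cells (Pos r) \<beta> \<subseteq> (\<Union>w \<in> set (conjugators (Pos r) \<beta>). origin w ` T)"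
    by (cases "s = r"; elim disjE; simp add: T_def conjugators_def cluster_cells_def)+
qed

lemma cluster_eq_cluster_cells:
  assumes \<beta>: "\<beta> \<in> insert Zero (range Pos)"
  shows "cluster (Pos r, \<beta>, PInf) = cluster_cells (Pos r) \<beta>"
proof
  have "(Pos r, \<beta>, PInf) \<in> cluster_cells (Pos r) \<beta>"
    by (simp add: cluster_cells_def)
  then show "cluster (Pos r, \<beta>, PInf) \<subseteq> cluster_cells (Pos r) \<beta>"
    by (rule cluster_subset) (rule qturn_cluster_cells)
next
  let ?a = "(Pos r, \<beta>, PInf)"
  let ?T = "{(\<beta>, NInf, Neg r), (PInf, Pos r, \<beta>), (PInf, \<beta>, Neg r)}"
  have "qturn AY \<beta> ?a \<in> cluster ?a" "qturn AX PInf (qturn AY \<beta> ?a) \<in> cluster ?a"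
    "qturn AY NInf (qturn AX (Pos r) ?a) \<in> cluster ?a"
    by (intro cluster.fwd cluster.base)+
  then have cycle_cells: "?T \<subseteq> cluster ?a"
    by simp
  show "cluster_cells (Pos r) \<beta> \<subseteq> cluster ?a"
  proof
    fix d assume "d \<in> cluster_cells (Pos r) \<beta>"
    with conjugators_cover(2)[OF \<beta>] have "d \<in> (\<Union>w \<in> set (conjugators (Pos r) \<beta>). origin w ` ?T)"
      by (rule subsetD)
    then obtain w t where "t \<in> ?T" "d = origin w t" by blast
    then show "d \<in> cluster ?a" using cycle_cells by (blast intro: origin_in_cluster)
  qed
qed

lemma realizable_cyc3_cluster_cells:
  assumes \<beta>: "\<beta> \<in> insert Zero (range Pos)"
    and xyz: "x \<in> cluster_cells (Pos r) \<beta>" "y \<in> cluster_cells (Pos r) \<beta>"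
      "z \<in> cluster_cells (Pos r) \<beta>" "distinct [x, y, z]"
  shows "realizable {PInf, NInf, Pos r, Neg r, \<beta>, cneg \<beta>} (cyc3 x y z)"
proof -
  let ?L = "{PInf, NInf, Pos r, Neg r, \<beta>, cneg \<beta>}"
  let ?a = "(Pos r, \<beta>, PInf)" and ?b = "(\<beta>, NInf, Neg r)"
  have comp: "\<And>V W. V \<in> Collect (realizable ?L) \<Longrightarrow> W \<in> Collect (realizable ?L) \<Longrightarrow>
      V \<circ> W \<in> Collect (realizable ?L)"
    by (simp add: realizable_comp)
  have base: "realizable ?L (cyc3 ?b (PInf, Pos r, \<beta>) (PInf, \<beta>, Neg r))"
  proof -
    have "moves_in ?L (three_cycle_word (Pos r) \<beta>)" by (simp add: three_cycle_word_def)
    then show ?thesis unfolding realizable_def using origin_three_cycle_word[OF \<beta>] by blast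
  qed
  have pair: "cyc3 ?a ?b x \<in> Collect (realizable ?L)"
    if x: "x \<in> cluster_cells (Pos r) \<beta>" "x \<noteq> ?a" "x \<noteq> ?b" for x
  proof -
    obtain w where w: "w \<in> set (conjugators (Pos r) \<beta>)"
      and "x \<in> origin w ` {?b, (PInf, Pos r, \<beta>), (PInf, \<beta>, Neg r)}"
      using conjugators_cover(2)[OF \<beta>] x(1) by blast
    moreover have "{?a, ?b} \<subseteq> origin w ` {?b, (PInf, Pos r, \<beta>), (PInf, \<beta>, Neg r)}"
      using conjugators_cover(1)[OF \<beta>] w by blast
    ultimately have sub: "{?a, ?b, x} \<subseteq> {origin w ?b, origin w (PInf, Pos r, \<beta>), origin w (PInf, \<beta>, Neg r)}"
      by auto
    have "moves_in ?L w"
      using w by (auto simp: conjugators_def)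
    then have conj: "cyc3 (origin w ?b) (origin w (PInf, Pos r, \<beta>)) (origin w (PInf, \<beta>, Neg r))
        \<in> Collect (realizable ?L)"
      using realizable_cyc3_conj[OF base] by simp
    have "distinct [?a, ?b, x]" using x(2,3) by simp
    from cyc3_same_points[OF comp conj sub this] show ?thesis .
  qed
  have "?a \<noteq> ?b" by simp
  from three_cycles_from_pair[OF comp this pair xyz] show ?thesis by simp
qed

lemma twists_in_layers:
  assumes "moves_in {PInf, NInf, \<alpha>, cneg \<alpha>, \<beta>, cneg \<beta>} ms" and "\<sigma> \<in> set (map twist ms)"
  shows "is_face_twist \<sigma> \<or>
    (\<exists>i \<gamma> j. \<gamma> \<in> {\<alpha>, cneg \<alpha>, \<beta>, cneg \<beta>} \<and> j \<in> {1, 2, 3} \<and> \<sigma> = basic_twist_of i \<gamma> j)"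
proof -
  obtain i a j where "(i, a, j) \<in> set ms" and \<sigma>: "\<sigma> = basic_twist_of i a j"
    using assms(2) by auto
  then have "a \<in> {PInf, NInf, \<alpha>, cneg \<alpha>, \<beta>, cneg \<beta>}" "j \<in> {1, 2, 3}"
    using assms(1) unfolding moves_in_def by auto
  then show ?thesis unfolding is_face_twist_def \<sigma> by blast
qed

theorem lemma5p3:
  fixes f :: "'a config" and c :: "'a point" and C :: "'a point set"
    and \<alpha> \<beta> :: "'a coord"
  assumes "infinite (UNIV :: 'a set)"
    and "legal f"
    and "accessible TYPE('i::wellorder) f_solved f"
    and "is_cell c" and "C = cluster c" and "C \<noteq> center_cluster"
    and "(\<alpha>, \<beta>, PInf) \<in> C"
    and "\<alpha> \<in> range Pos" and "\<beta> \<in> insert Zero (range Pos)"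
  shows "\<exists>s. (\<forall>\<sigma>\<in>set s. is_face_twist \<sigma> \<or>
               (\<exists>i \<gamma> j. \<gamma> \<in> {\<alpha>, cneg \<alpha>, \<beta>, cneg \<beta>} \<and> j \<in> {1,2,3} \<and>
                        \<sigma> = basic_twist_of i \<gamma> j)) \<and>
             (\<forall>d\<in>C. apply_seq s f d = f_solved d) \<and>
             (\<forall>d. is_cell d \<and> d \<notin> C \<longrightarrow> apply_seq s f d = f d)"
proof -
  obtain r where \<alpha>: "\<alpha> = Pos r" using assms(8) by blast
  have "cluster c = cluster (\<alpha>, \<beta>, PInf)" using cluster_eq assms(5,7) by metis
  then have C: "C = cluster_cells (Pos r) \<beta>"
    using cluster_eq_cluster_cells[OF assms(9)] assms(5) \<alpha> by simp
  have fin: "finite C" by (simp add: C cluster_cells_def)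
  have cells: "\<And>d. d \<in> C \<Longrightarrow> is_cell d"
    using is_cell_cluster_cells[OF assms(9)] C by blast
  have closed: "\<And>d i a. d \<in> C \<Longrightarrow> qturn i a d \<in> C"
    using qturn_cluster_cells C by blast
  have partner: "\<exists>d' \<in> C. d' \<noteq> d \<and> f_solved d' = f_solved d" if "d \<in> C" for d
    using half_turn_cluster_cells[OF assms(9), of d r] that C by blast
  have cycles: "\<And>x y z. x \<in> C \<Longrightarrow> y \<in> C \<Longrightarrow> z \<in> C \<Longrightarrow> distinct [x, y, z] \<Longrightarrow>
      realizable {PInf, NInf, Pos r, Neg r, \<beta>, cneg \<beta>} (cyc3 x y z)"
    using realizable_cyc3_cluster_cells[OF assms(9)] C by blast
  obtain ms where "moves_in {PInf, NInf, Pos r, Neg r, \<beta>, cneg \<beta>} ms"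
    and "\<forall>d \<in> C. apply_seq (map twist ms) f d = f_solved d"
    and "\<forall>d. is_cell d \<and> d \<notin> C \<longrightarrow> apply_seq (map twist ms) f d = f d"
    using solve_closed_set[OF fin cells closed partner cycles assms(2,3)] by blast
  moreover have "{PInf, NInf, Pos r, Neg r, \<beta>, cneg \<beta>} = {PInf, NInf, \<alpha>, cneg \<alpha>, \<beta>, cneg \<beta>}"
    using \<alpha> by simp
  ultimately show ?thesis using twists_in_layers by metis
qed

end
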